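(* Let $G$ be a simple loopless graph on $[L]$ and $p\ge1$. The map $\Phi_p:\Pi_{2p}(G)\to\mathcal{P}_{2p}(G)$ is injective.
   Context: $\mathcal{T}(G)=\langle v\in[L]: uv=vu \text{ for } (u,v)\in E(G)\rangle$ is the trace monoid of $G$, $e$ the empty word. Words are adjacent, $w_1\leftrightarrow w_2$, if $w_1=vw_2$ or $w_2=vw_1$ for a letter $v$. $\mathcal{P}_{2p}(G)=\{w\in\mathcal{T}(G)^{2p}: e\leftrightarrow w_1\leftrightarrow\cdots\leftrightarrow w_{2p}=e\}$. $P_2(2p)$ is the set of pair partitions of $[2p]$; blocks $\{u_1,v_1\},\{u_2,v_2\}$ cross if $u_1<u_2<v_1<v_2$; $F_\pi$ is the graph on the blocks of $\pi$ with edges between crossing blocks. $\Pi_{2p}(G)=\{(\pi,\phi):\pi\in P_2(2p),\ \phi\in\operatorname{Hom}(F_\pi,G)\}$. Definition of $\Phi_p$ (it takes values in $\mathcal{P}_{2p}(G)$): (1) For $p=1$, if $\phi$ assigns label $i$ to the block $\{1,2\}$, $\Phi_1(\pi,\phi)=(i,e)$. (2) Given $\Phi_p$ and $(\pi,\phi)\in\Pi_{2(p+1)}(G)$, let $r$ be the smallest index that is the larger element of its block, $U=\{s,r\}\in\pi$ with $s<r$, $i_s=\phi(U)$, $\sigma=\pi\setminus\{U\}$, $\psi=\phi|_\sigma$. Identify $P_2([2(p+1)]\setminus\{s,r\})$ with $P_2(2p)$ via the order-preserving bijection, write $u=\Phi_p(\sigma,\psi)=(u_k)_{k\in[2(p+1)]\setminus\{s,r\}}$,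 and let $u_{k^-}$ be $u_j$ for the largest $j<k$, $j\notin\{s,r\}$, or $e$ if none exists. Then $\Phi_{p+1}(\pi,\phi)_k=u_k$ for $k<s$; $i_su_{s^-}$ for $k=s$; $i_su_k$ for $s<k<r$; $u_{r^-}$ for $k=r$; $u_k$ for $k>r$. *)

theory Defs
  imports Main "HOL-Library.FuncSet" "HOL-Library.Disjoint_Sets"
begin

text \<open>Trace monoid T(G): words (nat lists) modulo commutation of letters u v with E u v.
  A trace is represented by its equivalence class (a set of words).\<close>

definition swap1 :: "(nat \<Rightarrow> nat \<Rightarrow> bool) \<Rightarrow> nat list \<Rightarrow> nat list \<Rightarrow> bool" where
  "swap1 E x y \<longleftrightarrow> (\<exists>xs ys a b. E a b \<and> x = xs @ a # b # ys \<and> y = xs @ b # a # ys)"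

definition trace_eq :: "(nat \<Rightarrow> nat \<Rightarrow> bool) \<Rightarrow> nat list \<Rightarrow> nat list \<Rightarrow> bool" where
  "trace_eq E = equivclp (swap1 E)"

definition tr :: "(nat \<Rightarrow> nat \<Rightarrow> bool) \<Rightarrow> nat list \<Rightarrow> nat list set" where
  "tr E w = {w'. trace_eq E w w'}"

definition lmul :: "(nat \<Rightarrow> nat \<Rightarrow> bool) \<Rightarrow> nat \<Rightarrow> nat list set \<Rightarrow> nat list set" where
  "lmul E v t = (\<Union>w\<in>t. tr E (v # w))"

definition simple_graph_on :: "nat \<Rightarrow> (nat \<Rightarrow> nat \<Rightarrow> bool) \<Rightarrow> bool" where
  "simple_graph_on L E \<longleftrightarrow>
     (\<forall>u v. E u v \<longrightarrow> u \<in> {1..L} \<and> v \<in> {1..L}) \<and>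
     (\<forall>u v. E u v \<longrightarrow> E v u) \<and> (\<forall>u. \<not> E u u)"

definition pair_partitions :: "nat \<Rightarrow> nat set set set" where
  "pair_partitions n = {\<pi>. partition_on {1..n} \<pi> \<and> (\<forall>B\<in>\<pi>. card B = 2)}"

definition crosses :: "nat set \<Rightarrow> nat set \<Rightarrow> bool" where
  "crosses B C \<longleftrightarrow> (\<exists>u1 v1 u2 v2. B = {u1, v1} \<and> C = {u2, v2} \<and> u1 < u2 \<and> u2 < v1 \<and> v1 < v2)"

definition F_edge :: "nat set \<Rightarrow> nat set \<Rightarrow> bool" where
  "F_edge B C \<longleftrightarrow> crosses B C \<or> crosses C B"

text \<open>Hom(F_pi, G): maps from the blocks of pi to the vertices [L] of G sending
  edges of F_pi to edges of G (extensional, so that phi is determined by its values on pi)\<close>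
definition graph_homs :: "nat \<Rightarrow> (nat \<Rightarrow> nat \<Rightarrow> bool) \<Rightarrow> nat set set \<Rightarrow> (nat set \<Rightarrow> nat) set" where
  "graph_homs L E \<pi> = {\<phi>. \<phi> \<in> \<pi> \<rightarrow>\<^sub>E {1..L} \<and> (\<forall>B\<in>\<pi>. \<forall>C\<in>\<pi>. F_edge B C \<longrightarrow> E (\<phi> B) (\<phi> C))}"

definition Pi2p :: "nat \<Rightarrow> (nat \<Rightarrow> nat \<Rightarrow> bool) \<Rightarrow> nat \<Rightarrow> (nat set set \<times> (nat set \<Rightarrow> nat)) set" where
  "Pi2p L E p = {(\<pi>, \<phi>). \<pi> \<in> pair_partitions (2 * p) \<and> \<phi> \<in> graph_homs L E \<pi>}"

text \<open>Phi_p(pi, phi) as the function k \<mapsto> w_k (k in {1..2p}).  In the recursive step,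
  f is the order-preserving bijection [2(p+1)] - {s,r} -> [2p] and finv its inverse.\<close>
fun PhiF :: "(nat \<Rightarrow> nat \<Rightarrow> bool) \<Rightarrow> nat \<Rightarrow> nat set set \<Rightarrow> (nat set \<Rightarrow> nat) \<Rightarrow> nat \<Rightarrow> nat list set" where
  "PhiF E 0 \<pi> \<phi> = (\<lambda>k. tr E [])"
| "PhiF E (Suc 0) \<pi> \<phi> = (\<lambda>k. if k = 1 then tr E [\<phi> {1, 2}] else tr E [])"
| "PhiF E (Suc (Suc p)) \<pi> \<phi> =
    (let r = (LEAST r. \<exists>s. s < r \<and> {s, r} \<in> \<pi>);
         s = (THE s. s < r \<and> {s, r} \<in> \<pi>);
         i = \<phi> {s, r};
         f = (\<lambda>k. if k < s then k else if k < r then k - 1 else k - 2);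
         finv = (\<lambda>j. if j < s then j else if j + 1 < r then j + 1 else j + 2);
         \<sigma> = (\<lambda>B. f ` B) ` (\<pi> - {{s, r}});
         \<psi> = (\<lambda>B. \<phi> (finv ` B));
         u' = PhiF E (Suc p) \<sigma> \<psi>;
         u = (\<lambda>k. u' (f k));
         uprev = (\<lambda>k. if \<exists>j. 1 \<le> j \<and> j < k \<and> j \<notin> {s, r}
                      then u (GREATEST j. 1 \<le> j \<and> j < k \<and> j \<notin> {s, r})
                      else tr E [])
     in (\<lambda>k. if k < s then u k
             else if k = s then lmul E i (uprev s)
             else if k < r then lmul E i (u k)
             else if k = r then uprev r
             else u k))"

definition Phi :: "(nat \<Rightarrow> nat \<Rightarrow> bool) \<Rightarrow> nat \<Rightarrow> nat set set \<times> (nat set \<Rightarrow> nat) \<Rightarrow> nat list set list" where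
  "Phi E p x = map (PhiF E p (fst x) (snd x)) [1..<2 * p + 1]"

end

theory Submission
  imports Defs "HOL-Library.Multiset"
begin

text \<open>
  Following the recursion, the k-th entry of \<open>\<Phi>(\<pi>, \<phi>)\<close> is a trace whose letters are, with
  multiplicity, the labels of the blocks \<open>{a, b}\<close> of \<open>\<pi>\<close> with \<open>a \<le> k < b\<close>. Equal traces have
  equal letter multisets, so \<open>\<Phi>(\<pi>, \<phi>)\<close> determines these multisets. Going from \<open>k - 1\<close> to
  \<open>k\<close>, the multiset gains a letter if a block opens at \<open>k\<close> and loses one if a block closes
  there, and that letter is the label of the block; so openers, closers and their labels
  are determined. The pairing itself is recovered by induction on the closer \<open>b\<close>: if the
  block closing at \<open>b\<close> were \<open>{a, b}\<close> in one pair partition and \<open>{a', b}\<close> with \<open>a' < a\<close> in the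
  other, then the block of the latter opening at \<open>a\<close> carries the same label. By induction it
  cannot close before \<open>b\<close>, and if it closed after \<open>b\<close> it would cross \<open>{a', b}\<close>, so that \<open>\<phi>\<close>
  would map an edge of \<open>F\<^sub>\<pi>\<close> to a loop of the loopless graph \<open>G\<close>.
\<close>

lemma trace_eq_mset:
  assumes "trace_eq E x y"
  shows "mset x = mset y"
  using assms unfolding trace_eq_def
proof (induction rule: equivclp_induct)
  case (step y z)
  from \<open>swap1 E y z \<or> swap1 E z y\<close> have "mset y = mset z"
    unfolding swap1_def by (auto simp: add_mset_commute)
  with step show ?case by simp
qed simp

lemma trace_eq_Cons:
  assumes "trace_eq E x y"
  shows "trace_eq E (i # x) (i # y)"
  using assms unfolding trace_eq_def
proof (induction rule: equivclp_induct)
  case (step y z)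
  from \<open>swap1 E y z \<or> swap1 E z y\<close>
  have "swap1 E (i # y) (i # z) \<or> swap1 E (i # z) (i # y)"
    unfolding swap1_def by (metis append_Cons)
  with step show ?case by (metis equivclp_into_equivclp)
qed simp

lemma tr_self: "w \<in> tr E w"
  by (simp add: tr_def trace_eq_def)

lemma lmul_tr: "lmul E i (tr E w) = tr E (i # w)"
proof
  show "lmul E i (tr E w) \<subseteq> tr E (i # w)"
    using trace_eq_Cons[of E w _ i]
    by (auto simp: lmul_def tr_def trace_eq_def intro: equivclp_trans)
  show "tr E (i # w) \<subseteq> lmul E i (tr E w)"
    using tr_self[of w E] by (auto simp: lmul_def)
qed

definition traces_with_content :: "(nat \<Rightarrow> nat \<Rightarrow> bool) \<Rightarrow> nat multiset \<Rightarrow> nat list set set" where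
  "traces_with_content E M = {tr E w | w. mset w = M}"

lemma tr_in_traces_with_content: "tr E w \<in> traces_with_content E (mset w)"
  by (auto simp: traces_with_content_def)

lemma lmul_in_traces_with_content:
  "t \<in> traces_with_content E M \<Longrightarrow> lmul E i t \<in> traces_with_content E (add_mset i M)"
  by (auto simp: traces_with_content_def lmul_tr)

lemma traces_with_content_unique:
  assumes "t \<in> traces_with_content E M" "t \<in> traces_with_content E M'"
  shows "M = M'"
proof -
  obtain w w' where "t = tr E w" "t = tr E w'" "M = mset w" "M' = mset w'"
    using assms by (auto simp: traces_with_content_def)
  then have "w' \<in> tr E w"
    using tr_self[of w' E] by simp
  then have "trace_eq E w w'"
    by (simp add: tr_def)
  with \<open>M = mset w\<close> \<open>M' = mset w'\<close> show ?thesis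
    by (simp add: trace_eq_mset)
qed

lemma pair_partitions_block:
  assumes "\<pi> \<in> pair_partitions n" "B \<in> \<pi>"
  obtains a b where "B = {a, b}" "a < b" "1 \<le> a" "b \<le> n"
proof -
  have "card B = 2" "B \<subseteq> {1..n}"
    using assms partition_onD1[of "{1..n}" \<pi>] by (auto simp: pair_partitions_def)
  then obtain a b where "B = {a, b}" "a < b"
    by (auto simp: card_2_iff) (metis insert_commute linorder_neqE_nat)
  with \<open>B \<subseteq> {1..n}\<close> show thesis
    using that by auto
qed

lemma pair_partitions_pair_bounds:
  assumes "\<pi> \<in> pair_partitions n" "{a, b} \<in> \<pi>" "a < b"
  shows "1 \<le> a" "b \<le> n"
proof -
  obtain a' b' where "{a, b} = {a', b'}" "a' < b'" "1 \<le> a'" "b' \<le> n"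
    using pair_partitions_block[OF assms(1,2)] .
  moreover from this assms(3) have "a = a'" "b = b'"
    by (metis doubleton_eq_iff not_less_iff_gr_or_eq)+
  ultimately show "1 \<le> a" "b \<le> n"
    by simp_all
qed

lemma pair_partitions_block_unique:
  assumes "\<pi> \<in> pair_partitions n" "B \<in> \<pi>" "C \<in> \<pi>" "x \<in> B" "x \<in> C"
  shows "B = C"
proof -
  have "disjoint \<pi>"
    using assms(1) partition_onD2 unfolding pair_partitions_def by blast
  with assms(2-5) show ?thesis
    by (meson disjointD disjoint_iff)
qed

lemma pair_partitions_cover:
  assumes "\<pi> \<in> pair_partitions n" "x \<in> {1..n}"
  obtains B where "B \<in> \<pi>" "x \<in> B"
proof -
  have "x \<in> \<Union>\<pi>"
    using assms partition_onD1[of "{1..n}" \<pi>] by (auto simp: pair_partitions_def)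
  then show thesis
    using that by blast
qed

lemma finite_pair_partition: "\<pi> \<in> pair_partitions n \<Longrightarrow> finite \<pi>"
  using finite_elements[of "{1..n}" \<pi>] by (auto simp: pair_partitions_def)

lemma pair_partitions_remove_pair:
  assumes "\<pi> \<in> pair_partitions n" "{a, b} \<in> \<pi>"
  shows "\<Union>(\<pi> - {{a, b}}) \<subseteq> {1..n} - {a, b}"
proof
  fix x assume "x \<in> \<Union>(\<pi> - {{a, b}})"
  then obtain B where B: "B \<in> \<pi>" "B \<noteq> {a, b}" "x \<in> B" by blast
  then have "x \<noteq> a" "x \<noteq> b"
    using pair_partitions_block_unique[OF assms(1) B(1) assms(2)] by auto
  moreover have "x \<in> {1..n}"
    using B assms(1) partition_onD1[of "{1..n}" \<pi>] by (auto simp: pair_partitions_def)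
  ultimately show "x \<in> {1..n} - {a, b}" by simp
qed

lemma pair_partitions_two:
  assumes "\<pi> \<in> pair_partitions 2"
  shows "\<pi> = {{1, 2}}"
proof -
  have "B = {1, 2}" if B: "B \<in> \<pi>" for B
  proof -
    obtain a b where "B = {a, b}" "a < b" "1 \<le> a" "b \<le> 2"
      using pair_partitions_block[OF assms B] .
    moreover from this have "a = 1" "b = 2"
      by linarith+
    ultimately show ?thesis
      by simp
  qed
  moreover obtain B where "B \<in> \<pi>"
    using pair_partitions_cover[OF assms, of 1] by auto
  ultimately show ?thesis
    by blast
qed

definition open_blocks :: "nat set set \<Rightarrow> nat \<Rightarrow> nat set set" where
  "open_blocks P k = {B \<in> P. \<exists>x\<in>B. \<exists>y\<in>B. x \<le> k \<and> k < y}"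

definition open_labels :: "nat set set \<Rightarrow> (nat set \<Rightarrow> nat) \<Rightarrow> nat \<Rightarrow> nat multiset" where
  "open_labels P \<phi> k = image_mset \<phi> (mset_set (open_blocks P k))"

lemma open_blocks_subset: "open_blocks P k \<subseteq> P"
  unfolding open_blocks_def by blast

lemma open_blocks_eq:
  assumes "j \<le> k" "\<forall>y\<in>\<Union>P. \<not> (j < y \<and> y \<le> k)"
  shows "open_blocks P j = open_blocks P k"
proof -
  have "x \<le> j \<longleftrightarrow> x \<le> k" if "x \<in> \<Union>P" for x
    using assms that by (meson le_trans not_le)
  then have "(\<exists>x\<in>B. \<exists>y\<in>B. x \<le> j \<and> j < y) \<longleftrightarrow> (\<exists>x\<in>B. \<exists>y\<in>B. x \<le> k \<and> k < y)"
    if "B \<in> P" for B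
    using that by (meson UnionI not_le)
  then show ?thesis
    unfolding open_blocks_def by blast
qed

lemma open_blocks_pred:
  assumes "k \<notin> \<Union>P"
  shows "open_blocks P (k - 1) = open_blocks P k"
proof (rule open_blocks_eq)
  have "y = k" if "k - 1 < y" "y \<le> k" for y
    using that by arith
  with assms show "\<forall>y\<in>\<Union>P. \<not> (k - 1 < y \<and> y \<le> k)"
    by blast
qed simp

lemma open_blocks_eq_empty: "\<forall>y\<in>\<Union>P. k < y \<Longrightarrow> open_blocks P k = {}"
  unfolding open_blocks_def by (auto simp: not_le)

lemma open_blocks_Un: "open_blocks (A \<union> P) k = open_blocks A k \<union> open_blocks P k"
  unfolding open_blocks_def by blast

lemma open_blocks_pair:
  assumes "a < b"
  shows "open_blocks {{a, b}} k = (if a \<le> k \<and> k < b then {{a, b}} else {})"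
  using assms unfolding open_blocks_def by auto

lemma open_labels_remove_pair:
  assumes "\<pi> \<in> pair_partitions n" "{a, b} \<in> \<pi>" "a < b"
  shows "open_labels \<pi> \<phi> k =
    (if a \<le> k \<and> k < b then add_mset (\<phi> {a, b}) (open_labels (\<pi> - {{a, b}}) \<phi> k)
     else open_labels (\<pi> - {{a, b}}) \<phi> k)"
proof -
  define P where "P = \<pi> - {{a, b}}"
  have "\<pi> = {{a, b}} \<union> P"
    using assms(2) unfolding P_def by blast
  then have blocks: "open_blocks \<pi> k = open_blocks {{a, b}} k \<union> open_blocks P k"
    by (simp only: open_blocks_Un)
  have "finite P"
    using finite_pair_partition[OF assms(1)] unfolding P_def by simp
  then have "finite (open_blocks P k)"
    by (rule finite_subset[OF open_blocks_subset])
  moreover have "{a, b} \<notin> open_blocks P k"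
    using open_blocks_subset unfolding P_def by blast
  ultimately show ?thesis
    unfolding open_labels_def P_def[symmetric] blocks open_blocks_pair[OF assms(3)] by simp
qed

lemma open_labels_at_pair:
  assumes "\<pi> \<in> pair_partitions n" "{a, b} \<in> \<pi>" "a < b"
  shows open_labels_at_opener: "open_labels \<pi> \<phi> a = add_mset (\<phi> {a, b}) (open_labels \<pi> \<phi> (a - 1))"
    and open_labels_at_closer: "open_labels \<pi> \<phi> (b - 1) = add_mset (\<phi> {a, b}) (open_labels \<pi> \<phi> b)"
proof -
  define P where "P = \<pi> - {{a, b}}"
  have "1 \<le> a"
    using pair_partitions_pair_bounds[OF assms] by simp
  have "a \<notin> \<Union>P" "b \<notin> \<Union>P"
    using pair_partitions_remove_pair[OF assms(1,2)] unfolding P_def by auto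
  then have "open_labels P \<phi> (a - 1) = open_labels P \<phi> a" "open_labels P \<phi> (b - 1) = open_labels P \<phi> b"
    unfolding open_labels_def by (metis open_blocks_pred)+
  moreover note open_labels_remove_pair[OF assms, of \<phi>, folded P_def]
  ultimately show "open_labels \<pi> \<phi> a = add_mset (\<phi> {a, b}) (open_labels \<pi> \<phi> (a - 1))"
    and "open_labels \<pi> \<phi> (b - 1) = add_mset (\<phi> {a, b}) (open_labels \<pi> \<phi> b)"
    using \<open>1 \<le> a\<close> assms(3) by auto
qed

lemma open_labels_zero:
  assumes "\<pi> \<in> pair_partitions n"
  shows "open_labels \<pi> \<phi> 0 = {#}"
proof -
  have "\<Union>\<pi> = {1..n}"
    using assms partition_onD1 unfolding pair_partitions_def by blast
  then have "open_blocks \<pi> 0 = {}"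
    by (intro open_blocks_eq_empty) auto
  then show ?thesis
    unfolding open_labels_def by simp
qed

text \<open>The order-preserving bijection \<open>[n] - {s, r} \<rightarrow> [n - 2]\<close> of the recursive step of \<open>\<Phi>\<close>,
  and its inverse.\<close>

definition squeeze :: "nat \<Rightarrow> nat \<Rightarrow> nat \<Rightarrow> nat" where
  "squeeze s r k = (if k < s then k else if k < r then k - 1 else k - 2)"

definition unsqueeze :: "nat \<Rightarrow> nat \<Rightarrow> nat \<Rightarrow> nat" where
  "unsqueeze s r j = (if j < s then j else if j + 1 < r then j + 1 else j + 2)"

definition remove_block :: "nat \<Rightarrow> nat \<Rightarrow> nat set set \<Rightarrow> nat set set" where
  "remove_block s r \<pi> = (`) (squeeze s r) ` (\<pi> - {{s, r}})"

lemma strict_mono_on_squeeze: "s < r \<Longrightarrow> strict_mono_on (- {s, r}) (squeeze s r)"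
  by (auto simp: strict_mono_on_def squeeze_def)

lemma unsqueeze_squeeze: "s < r \<Longrightarrow> k \<notin> {s, r} \<Longrightarrow> unsqueeze s r (squeeze s r k) = k"
  by (auto simp: squeeze_def unsqueeze_def)

lemma squeeze_image:
  assumes "1 \<le> s" "s < r" "r \<le> n"
  shows "squeeze s r ` ({1..n} - {s, r}) = {1..n - 2}"
proof
  show "squeeze s r ` ({1..n} - {s, r}) \<subseteq> {1..n - 2}"
    using assms by (auto simp: squeeze_def)
  show "{1..n - 2} \<subseteq> squeeze s r ` ({1..n} - {s, r})"
  proof
    fix j assume "j \<in> {1..n - 2}"
    then have "unsqueeze s r j \<in> {1..n} - {s, r}" "squeeze s r (unsqueeze s r j) = j"
      using assms by (auto simp: squeeze_def unsqueeze_def)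
    then show "j \<in> squeeze s r ` ({1..n} - {s, r})"
      by (metis image_eqI)
  qed
qed

lemma remove_block_pair_partitions:
  assumes pp: "\<pi> \<in> pair_partitions n" and sr: "{s, r} \<in> \<pi>" "s < r"
  shows "remove_block s r \<pi> \<in> pair_partitions (n - 2)"
proof -
  define C where "C = {1..n} - {s, r}"
  define P where "P = \<pi> - {{s, r}}"
  have points: "\<Union>P \<subseteq> C"
    using pair_partitions_remove_pair[OF pp sr(1)] unfolding C_def P_def .
  have inj: "inj_on (squeeze s r) C"
    using strict_mono_on_imp_inj_on[OF strict_mono_on_squeeze[OF sr(2)]] unfolding C_def
    by (rule inj_on_subset) blast
  have "partition_on {1..n} (insert {s, r} P)"
    using pp sr(1) unfolding P_def pair_partitions_def by (simp add: insert_absorb)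
  moreover have "disjnt {s, r} (\<Union>P)"
    using points unfolding C_def disjnt_def by blast
  ultimately have "partition_on C P"
    unfolding C_def by (simp add: partition_on_insert)
  then have "partition_on (squeeze s r ` C) (remove_block s r \<pi> - {{}})"
    unfolding remove_block_def P_def[symmetric] by (rule partition_on_inj_image[OF _ inj])
  moreover have "{} \<notin> remove_block s r \<pi>"
    using \<open>partition_on C P\<close> partition_onD3 unfolding remove_block_def P_def[symmetric] by blast
  moreover have "card (squeeze s r ` B) = 2" if "B \<in> P" for B
  proof -
    have "inj_on (squeeze s r) B"
      using inj points that by (meson Union_upper inj_on_subset subset_trans)
    then show ?thesis
      using pp that unfolding P_def pair_partitions_def by (simp add: card_image)
  qed
  ultimately show ?thesis
    using squeeze_image[OF pair_partitions_pair_bounds(1)[OF pp sr] sr(2) pair_partitions_pair_bounds(2)[OF pp sr]]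
    unfolding pair_partitions_def C_def[symmetric] remove_block_def P_def[symmetric] by auto
qed

lemma open_blocks_image:
  assumes "strict_mono_on A f" "\<Union>P \<subseteq> A" "k \<in> A"
  shows "open_blocks ((`) f ` P) (f k) = (`) f ` open_blocks P k"
proof -
  have "(\<exists>x\<in>f ` B. \<exists>y\<in>f ` B. x \<le> f k \<and> f k < y) \<longleftrightarrow> (\<exists>x\<in>B. \<exists>y\<in>B. x \<le> k \<and> k < y)"
    if "B \<in> P" for B
  proof -
    have "\<forall>x\<in>B. (f x \<le> f k \<longleftrightarrow> x \<le> k) \<and> (f k < f x \<longleftrightarrow> k < x)"
      using strict_mono_on_less_eq[OF assms(1) _ assms(3)] strict_mono_on_less[OF assms(1) assms(3)]
        that assms(2) by blast
    then show ?thesis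
      by auto
  qed
  then show ?thesis
    unfolding open_blocks_def by blast
qed

lemma open_labels_image:
  assumes "strict_mono_on A f" "\<Union>P \<subseteq> A" "k \<in> A" and "\<And>B. B \<in> P \<Longrightarrow> \<psi> (f ` B) = \<phi> B"
  shows "open_labels ((`) f ` P) \<psi> (f k) = open_labels P \<phi> k"
proof -
  have "inj_on f (\<Union>P)"
    using strict_mono_on_imp_inj_on[OF assms(1)] assms(2) by (rule inj_on_subset)
  then have "inj_on ((`) f) (open_blocks P k)"
    by (rule inj_on_subset[OF inj_on_image open_blocks_subset])
  then have "open_labels ((`) f ` P) \<psi> (f k) = image_mset (\<psi> \<circ> (`) f) (mset_set (open_blocks P k))"
    unfolding open_labels_def open_blocks_image[OF assms(1-3)]
    by (simp add: image_mset_mset_set[symmetric] multiset.map_comp)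
  also have "\<dots> = open_labels P \<phi> k"
    unfolding open_labels_def
  proof (rule image_mset_cong)
    fix B assume "B \<in># mset_set (open_blocks P k)"
    then have "B \<in> P"
      using open_blocks_subset by (metis count_mset_set' count_eq_zero_iff subsetD)
    then show "(\<psi> \<circ> (`) f) B = \<phi> B"
      using assms(4) by simp
  qed
  finally show ?thesis .
qed

lemma open_labels_remove_block:
  assumes "\<pi> \<in> pair_partitions n" "{s, r} \<in> \<pi>" "s < r" "k \<notin> {s, r}"
  shows "open_labels (remove_block s r \<pi>) (\<lambda>B. \<phi> (unsqueeze s r ` B)) (squeeze s r k) =
    open_labels (\<pi> - {{s, r}}) \<phi> k"
  unfolding remove_block_def
proof (rule open_labels_image[OF strict_mono_on_squeeze[OF assms(3)]])
  show "\<Union>(\<pi> - {{s, r}}) \<subseteq> - {s, r}"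
    using pair_partitions_remove_pair[OF assms(1,2)] by blast
  then have "\<forall>x\<in>B. unsqueeze s r (squeeze s r x) = x" if "B \<in> \<pi> - {{s, r}}" for B
    using that unsqueeze_squeeze[OF assms(3)] by blast
  then show "\<phi> (unsqueeze s r ` squeeze s r ` B) = \<phi> B" if "B \<in> \<pi> - {{s, r}}" for B
    using that by (simp add: image_image)
qed (use assms(4) in auto)

text \<open>\<open>prev_entry E {s, r} u k\<close> is the paper's \<open>u\<^sub>k\<^sub>-\<close>, and \<open>insert_block E i s r u\<close> is
  \<open>\<Phi>\<^sub>p\<^sub>+\<^sub>1(\<pi>, \<phi>)\<close> built from \<open>u = \<Phi>\<^sub>p(\<sigma>, \<psi>)\<close> and the removed block \<open>{s, r}\<close> with label \<open>i\<close>.\<close>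

definition prev_entry :: "(nat \<Rightarrow> nat \<Rightarrow> bool) \<Rightarrow> nat set \<Rightarrow> (nat \<Rightarrow> nat list set) \<Rightarrow> nat \<Rightarrow> nat list set" where
  "prev_entry E S u k =
    (if \<exists>j. 1 \<le> j \<and> j < k \<and> j \<notin> S then u (GREATEST j. 1 \<le> j \<and> j < k \<and> j \<notin> S) else tr E [])"

definition insert_block ::
    "(nat \<Rightarrow> nat \<Rightarrow> bool) \<Rightarrow> nat \<Rightarrow> nat \<Rightarrow> nat \<Rightarrow> (nat \<Rightarrow> nat list set) \<Rightarrow> nat \<Rightarrow> nat list set" where
  "insert_block E i s r u k =
    (if k < s then u k
     else if k = s then lmul E i (prev_entry E {s, r} u s)
     else if k < r then lmul E i (u k)
     else if k = r then prev_entry E {s, r} u r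
     else u k)"

lemma PhiF_Suc_Suc:
  "PhiF E (Suc (Suc p)) \<pi> \<phi> =
    (let r = LEAST r. \<exists>s. s < r \<and> {s, r} \<in> \<pi>;
         s = THE s. s < r \<and> {s, r} \<in> \<pi>
     in insert_block E (\<phi> {s, r}) s r
          (\<lambda>k. PhiF E (Suc p) (remove_block s r \<pi>) (\<lambda>B. \<phi> (unsqueeze s r ` B)) (squeeze s r k)))"
  unfolding PhiF.simps(3) Let_def insert_block_def prev_entry_def remove_block_def
  unfolding squeeze_def unsqueeze_def ..

lemma least_closer_block:
  assumes "\<pi> \<in> pair_partitions n" "\<pi> \<noteq> {}"
  defines "r \<equiv> LEAST r. \<exists>s. s < r \<and> {s, r} \<in> \<pi>"
  defines "s \<equiv> THE s. s < r \<and> {s, r} \<in> \<pi>"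
  shows "s < r" "{s, r} \<in> \<pi>"
proof -
  obtain B where "B \<in> \<pi>"
    using assms(2) by blast
  then obtain a b where "a < b" "{a, b} \<in> \<pi>"
    using pair_partitions_block[OF assms(1)] by metis
  then have "\<exists>s. s < r \<and> {s, r} \<in> \<pi>"
    unfolding r_def by (intro LeastI[where P = "\<lambda>r. \<exists>s<r. {s, r} \<in> \<pi>"]) blast
  moreover have "t = t'" if "{t, r} \<in> \<pi>" "{t', r} \<in> \<pi>" for t t'
    using pair_partitions_block_unique[OF assms(1) that, of r] by (auto simp: doubleton_eq_iff)
  ultimately have "s < r \<and> {s, r} \<in> \<pi>"
    unfolding s_def by (metis (no_types, lifting) theI)
  then show "s < r" "{s, r} \<in> \<pi>" by simp_all
qed

lemma prev_entry_content:
  assumes u: "\<And>j. 1 \<le> j \<Longrightarrow> j < k \<Longrightarrow> j \<notin> S \<Longrightarrow> u j \<in> traces_with_content E (open_labels P \<phi> j)"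
    and points: "\<forall>x\<in>\<Union>P. 1 \<le> x \<and> x \<notin> S" and "k \<notin> \<Union>P"
  shows "prev_entry E S u k \<in> traces_with_content E (open_labels P \<phi> k)"
proof (cases "\<exists>j. 1 \<le> j \<and> j < k \<and> j \<notin> S")
  case True
  define g where "g = (GREATEST j. 1 \<le> j \<and> j < k \<and> j \<notin> S)"
  have g: "1 \<le> g \<and> g < k \<and> g \<notin> S"
    using True GreatestI_nat[of "\<lambda>j. 1 \<le> j \<and> j < k \<and> j \<notin> S" _ k] unfolding g_def by fastforce
  have g_max: "j \<le> g" if "1 \<le> j" "j < k" "j \<notin> S" for j
    using that Greatest_le_nat[of "\<lambda>j. 1 \<le> j \<and> j < k \<and> j \<notin> S" j k] unfolding g_def by fastforce
  have "open_blocks P g = open_blocks P k"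
  proof (rule open_blocks_eq)
    show "\<forall>y\<in>\<Union>P. \<not> (g < y \<and> y \<le> k)"
      using points g_max \<open>k \<notin> \<Union>P\<close> by (metis le_neq_implies_less not_le)
  qed (use g in simp)
  then show ?thesis
    using u[of g] g unfolding prev_entry_def if_P[OF True] g_def[symmetric] open_labels_def by simp
next
  case False
  then have "open_blocks P k = {}"
    using points \<open>k \<notin> \<Union>P\<close> by (intro open_blocks_eq_empty) (metis linorder_neqE_nat)
  then show ?thesis
    using tr_in_traces_with_content[of E "[]"] unfolding prev_entry_def open_labels_def if_not_P[OF False]
    by simp
qed

lemma insert_block_content:
  assumes pp: "\<pi> \<in> pair_partitions n" and sr: "{s, r} \<in> \<pi>" "s < r" and k: "k \<in> {1..n}"
    and u: "\<And>j. j \<in> {1..n} - {s, r} \<Longrightarrow>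
      u j \<in> traces_with_content E (open_labels (\<pi> - {{s, r}}) \<phi> j)"
  shows "insert_block E (\<phi> {s, r}) s r u k \<in> traces_with_content E (open_labels \<pi> \<phi> k)"
proof -
  define P where "P = \<pi> - {{s, r}}"
  have points: "\<Union>P \<subseteq> {1..n} - {s, r}"
    using pair_partitions_remove_pair[OF pp sr(1)] unfolding P_def .
  have "r \<le> n"
    using pair_partitions_pair_bounds[OF pp sr] by simp
  have prev: "prev_entry E {s, r} u x \<in> traces_with_content E (open_labels P \<phi> x)" if "x \<in> {s, r}" for x
  proof (rule prev_entry_content)
    show "u j \<in> traces_with_content E (open_labels P \<phi> j)" if "1 \<le> j" "j < x" "j \<notin> {s, r}" for j
      using u[of j] that \<open>x \<in> {s, r}\<close> \<open>r \<le> n\<close> sr(2) unfolding P_def by auto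
  qed (use points \<open>x \<in> {s, r}\<close> in auto)
  have labels: "open_labels \<pi> \<phi> k =
      (if s \<le> k \<and> k < r then add_mset (\<phi> {s, r}) (open_labels P \<phi> k) else open_labels P \<phi> k)"
    using open_labels_remove_pair[OF pp sr] unfolding P_def .
  consider "k < s" | "k = s" | "s < k \<and> k < r" | "k = r" | "r < k"
    by linarith
  then show ?thesis
  proof cases
    case 2
    then show ?thesis
      using prev[of s] labels sr(2) by (simp add: insert_block_def lmul_in_traces_with_content)
  next
    case 4
    then show ?thesis
      using prev[of r] labels sr(2) by (simp add: insert_block_def)
  qed (use u[of k] k labels sr(2) in \<open>auto simp: insert_block_def lmul_in_traces_with_content P_def\<close>)
qed

lemma PhiF_one_content:
  assumes "\<pi> \<in> pair_partitions 2" "k \<in> {1..2}"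
  shows "PhiF E 1 \<pi> \<phi> k \<in> traces_with_content E (open_labels \<pi> \<phi> k)"
proof -
  have \<pi>: "\<pi> = {{1, 2}}"
    using pair_partitions_two[OF assms(1)] .
  from assms(2) have "k = 1 \<or> k = 2"
    by auto
  then show ?thesis
  proof
    assume "k = 1"
    have "open_blocks {{1, 2}} 1 = {{1, 2}}"
      by (auto simp: open_blocks_def)
    then have "open_labels \<pi> \<phi> k = mset [\<phi> {1, 2}]"
      unfolding open_labels_def \<pi> \<open>k = 1\<close> by simp
    moreover have "PhiF E 1 \<pi> \<phi> k = tr E [\<phi> {1, 2}]"
      using \<open>k = 1\<close> by simp
    ultimately show ?thesis
      by (simp only: tr_in_traces_with_content)
  next
    assume "k = 2"
    have "open_blocks {{1, 2}} 2 = {}"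
      by (auto simp: open_blocks_def)
    then have "open_labels \<pi> \<phi> k = mset []"
      unfolding open_labels_def \<pi> \<open>k = 2\<close> by simp
    moreover have "PhiF E 1 \<pi> \<phi> k = tr E []"
      using \<open>k = 2\<close> by simp
    ultimately show ?thesis
      by (simp only: tr_in_traces_with_content)
  qed
qed

lemma PhiF_content:
  assumes "\<pi> \<in> pair_partitions (2 * Suc p)" "k \<in> {1..2 * Suc p}"
  shows "PhiF E (Suc p) \<pi> \<phi> k \<in> traces_with_content E (open_labels \<pi> \<phi> k)"
  using assms
proof (induction p arbitrary: \<pi> \<phi> k)
  case 0
  then have "\<pi> \<in> pair_partitions 2" "k \<in> {1..2}"
    by simp_all
  then show ?case
    using PhiF_one_content[of \<pi> k E \<phi>] by (simp only: One_nat_def)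
next
  case (Suc p)
  define r where "r = (LEAST r. \<exists>s. s < r \<and> {s, r} \<in> \<pi>)"
  define s where "s = (THE s. s < r \<and> {s, r} \<in> \<pi>)"
  obtain B where "B \<in> \<pi>"
    using pair_partitions_cover[OF Suc.prems(1), of 1] by auto
  then have "\<pi> \<noteq> {}"
    by blast
  then have sr: "s < r" "{s, r} \<in> \<pi>"
    using least_closer_block[OF Suc.prems(1)] unfolding r_def s_def by blast+
  have "PhiF E (Suc p) (remove_block s r \<pi>) (\<lambda>B. \<phi> (unsqueeze s r ` B)) (squeeze s r j)
      \<in> traces_with_content E (open_labels (\<pi> - {{s, r}}) \<phi> j)"
    if "j \<in> {1..2 * Suc (Suc p)} - {s, r}" for j
  proof -
    have "squeeze s r j \<in> squeeze s r ` ({1..2 * Suc (Suc p)} - {s, r})"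
      using that by (rule imageI)
    then have "squeeze s r j \<in> {1..2 * Suc p}"
      using squeeze_image[OF pair_partitions_pair_bounds(1)[OF Suc.prems(1) sr(2,1)] sr(1)
          pair_partitions_pair_bounds(2)[OF Suc.prems(1) sr(2,1)]]
      by simp
    moreover have "remove_block s r \<pi> \<in> pair_partitions (2 * Suc p)"
      using remove_block_pair_partitions[OF Suc.prems(1) sr(2,1)] by simp
    ultimately show ?thesis
      using Suc.IH[of "remove_block s r \<pi>" "squeeze s r j" "\<lambda>B. \<phi> (unsqueeze s r ` B)"]
        open_labels_remove_block[OF Suc.prems(1) sr(2,1), of j \<phi>] that
      by simp
  qed
  then show ?case
    unfolding PhiF_Suc_Suc Let_def r_def[symmetric] s_def[symmetric]
    by (rule insert_block_content[OF Suc.prems(1) sr(2,1) Suc.prems(2), where \<phi> = \<phi>])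
qed

lemma graph_homs_crossing:
  assumes "\<phi> \<in> graph_homs L E \<pi>" "{a, b} \<in> \<pi>" "{c, d} \<in> \<pi>" "a < c" "c < b" "b < d"
  shows "E (\<phi> {a, b}) (\<phi> {c, d})"
proof -
  have "F_edge {a, b} {c, d}"
    using assms(4-6) unfolding F_edge_def crosses_def by blast
  with assms(1-3) show ?thesis
    unfolding graph_homs_def by blast
qed

lemma opener_of_open_labels_eq:
  assumes pp: "\<pi> \<in> pair_partitions n" and pp': "\<pi>' \<in> pair_partitions n"
    and eq: "\<And>j. j \<le> n \<Longrightarrow> open_labels \<pi> \<phi> j = open_labels \<pi>' \<phi>' j"
    and kb: "{k, b} \<in> \<pi>" "k < b"
  obtains b' where "{k, b'} \<in> \<pi>'" "k < b'" "\<phi>' {k, b'} = \<phi> {k, b}"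
proof -
  have "1 \<le> k" "k \<le> n"
    using pair_partitions_pair_bounds[OF pp kb] kb(2) by linarith+
  then obtain B' where B': "B' \<in> \<pi>'" "k \<in> B'"
    using pair_partitions_cover[OF pp'] by auto
  obtain x y where "B' = {x, y}" "x < y" "1 \<le> x" "y \<le> n"
    using pair_partitions_block[OF pp' B'(1)] .
  with B' have xy: "{x, y} \<in> \<pi>'" "x < y" "k = x \<or> k = y"
    by auto
  have M: "open_labels \<pi>' \<phi>' k = add_mset (\<phi> {k, b}) (open_labels \<pi>' \<phi>' (k - 1))"
    using open_labels_at_opener[OF pp kb] eq[of k] eq[of "k - 1"] \<open>k \<le> n\<close> by simp
  show thesis
  proof (cases "k = x")
    case True
    then have "\<phi>' {k, y} = \<phi> {k, b}"
      using M open_labels_at_opener[OF pp' xy(1,2), of \<phi>'] by simp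
    with True xy that show thesis
      by blast
  next
    case False
    then have "open_labels \<pi>' \<phi>' (k - 1) = add_mset (\<phi>' {x, k}) (open_labels \<pi>' \<phi>' k)"
      using open_labels_at_closer[OF pp' xy(1,2)] xy(3) by simp
    then have "size (open_labels \<pi>' \<phi>' (k - 1)) = Suc (size (open_labels \<pi>' \<phi>' k))"
      by simp
    moreover have "size (open_labels \<pi>' \<phi>' k) = Suc (size (open_labels \<pi>' \<phi>' (k - 1)))"
      using M by simp
    ultimately show thesis
      by simp
  qed
qed

lemma closer_of_open_labels_eq:
  assumes pp: "\<pi> \<in> pair_partitions n" and pp': "\<pi>' \<in> pair_partitions n"
    and eq: "\<And>j. j \<le> n \<Longrightarrow> open_labels \<pi> \<phi> j = open_labels \<pi>' \<phi>' j"
    and ak: "{a, k} \<in> \<pi>" "a < k"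
  obtains a' where "{a', k} \<in> \<pi>'" "a' < k" "\<phi>' {a', k} = \<phi> {a, k}"
proof -
  have "1 \<le> k" "k \<le> n"
    using pair_partitions_pair_bounds[OF pp ak] ak(2) by linarith+
  then obtain B' where B': "B' \<in> \<pi>'" "k \<in> B'"
    using pair_partitions_cover[OF pp'] by auto
  obtain x y where "B' = {x, y}" "x < y" "1 \<le> x" "y \<le> n"
    using pair_partitions_block[OF pp' B'(1)] .
  with B' have xy: "{x, y} \<in> \<pi>'" "x < y" "k = x \<or> k = y"
    by auto
  have M: "open_labels \<pi>' \<phi>' (k - 1) = add_mset (\<phi> {a, k}) (open_labels \<pi>' \<phi>' k)"
    using open_labels_at_closer[OF pp ak] eq[of k] eq[of "k - 1"] \<open>k \<le> n\<close> by simp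
  show thesis
  proof (cases "k = y")
    case True
    then have "\<phi>' {x, k} = \<phi> {a, k}"
      using M open_labels_at_closer[OF pp' xy(1,2), of \<phi>'] by simp
    with True xy that show thesis
      by blast
  next
    case False
    then have "open_labels \<pi>' \<phi>' k = add_mset (\<phi>' {k, y}) (open_labels \<pi>' \<phi>' (k - 1))"
      using open_labels_at_opener[OF pp' xy(1,2)] xy(3) by simp
    then have "size (open_labels \<pi>' \<phi>' k) = Suc (size (open_labels \<pi>' \<phi>' (k - 1)))"
      by simp
    moreover have "size (open_labels \<pi>' \<phi>' (k - 1)) = Suc (size (open_labels \<pi>' \<phi>' k))"
      using M by simp
    ultimately show thesis
      by simp
  qed
qed

lemma closer_partner_not_earlier:
  assumes loopless: "\<And>v. \<not> E v v"
    and pp: "\<pi> \<in> pair_partitions n" and pp': "\<pi>' \<in> pair_partitions n" and h': "\<phi>' \<in> graph_homs L E \<pi>'"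
    and eq: "\<And>j. j \<le> n \<Longrightarrow> open_labels \<pi> \<phi> j = open_labels \<pi>' \<phi>' j"
    and IH: "\<And>c d. c < d \<Longrightarrow> d < b \<Longrightarrow> {c, d} \<in> \<pi>' \<Longrightarrow> {c, d} \<in> \<pi>"
    and ab: "{a, b} \<in> \<pi>" "a < b" and a'b: "{a', b} \<in> \<pi>'" "a' < a"
    and label: "\<phi>' {a', b} = \<phi> {a, b}"
  shows False
proof -
  obtain d where ad: "{a, d} \<in> \<pi>'" "a < d" "\<phi>' {a, d} = \<phi> {a, b}"
    using opener_of_open_labels_eq[OF pp pp' eq ab] .
  consider "d = b" | "b < d" | "d < b"
    by linarith
  then show False
  proof cases
    case 1
    then have "{a, b} = {a', b}"
      using pair_partitions_block_unique[OF pp' ad(1) a'b(1), of b] by simp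
    with a'b(2) show False
      by (simp add: doubleton_eq_iff)
  next
    case 2
    then have "E (\<phi>' {a', b}) (\<phi>' {a, d})"
      using graph_homs_crossing[OF h' a'b(1) ad(1)] a'b(2) ab(2) by blast
    with label ad(3) loopless show False
      by simp
  next
    case 3
    then have "{a, d} = {a, b}"
      using IH[OF ad(2) 3 ad(1)] pair_partitions_block_unique[OF pp _ ab(1), of "{a, d}" a] by simp
    with 3 show False
      by (simp add: doubleton_eq_iff)
  qed
qed

lemma closing_block_transfer:
  assumes loopless: "\<And>v. \<not> E v v"
    and pp: "\<pi> \<in> pair_partitions n" and pp': "\<pi>' \<in> pair_partitions n"
    and h: "\<phi> \<in> graph_homs L E \<pi>" and h': "\<phi>' \<in> graph_homs L E \<pi>'"
    and eq: "\<And>j. j \<le> n \<Longrightarrow> open_labels \<pi> \<phi> j = open_labels \<pi>' \<phi>' j"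
    and IH: "\<And>c d. c < d \<Longrightarrow> d < b \<Longrightarrow> {c, d} \<in> \<pi> \<longleftrightarrow> {c, d} \<in> \<pi>'"
    and ab: "{a, b} \<in> \<pi>" "a < b"
  shows "{a, b} \<in> \<pi>'"
proof -
  obtain a' where a'b: "{a', b} \<in> \<pi>'" "a' < b" "\<phi>' {a', b} = \<phi> {a, b}"
    using closer_of_open_labels_eq[OF pp pp' eq ab] .
  consider "a' = a" | "a' < a" | "a < a'"
    by linarith
  then show ?thesis
  proof cases
    case 1
    with a'b show ?thesis
      by simp
  next
    case 2
    show ?thesis
      using closer_partner_not_earlier[OF loopless pp pp' h' eq _ ab a'b(1) 2 a'b(3)] IH by blast
  next
    case 3
    show ?thesis
      using closer_partner_not_earlier[OF loopless pp' pp h eq[symmetric] _ a'b(1,2) ab(1) 3 a'b(3)[symmetric]] IH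
      by blast
  qed
qed

lemma pair_partition_eq_if_open_labels_eq:
  assumes loopless: "\<And>v. \<not> E v v"
    and pp: "\<pi> \<in> pair_partitions n" and pp': "\<pi>' \<in> pair_partitions n"
    and h: "\<phi> \<in> graph_homs L E \<pi>" and h': "\<phi>' \<in> graph_homs L E \<pi>'"
    and eq: "\<And>j. j \<le> n \<Longrightarrow> open_labels \<pi> \<phi> j = open_labels \<pi>' \<phi>' j"
  shows "\<pi> = \<pi>'"
proof -
  have same_blocks: "\<forall>a<b. {a, b} \<in> \<pi> \<longleftrightarrow> {a, b} \<in> \<pi>'" for b
  proof (induction b rule: less_induct)
    case (less b)
    then have "\<And>c d. c < d \<Longrightarrow> d < b \<Longrightarrow> {c, d} \<in> \<pi> \<longleftrightarrow> {c, d} \<in> \<pi>'"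
      by blast
    then show ?case
      using closing_block_transfer[OF loopless pp pp' h h' eq]
        closing_block_transfer[OF loopless pp' pp h' h eq[symmetric]] by blast
  qed
  have "B \<in> \<pi>'" if "B \<in> \<pi>" for B
    using pair_partitions_block[OF pp that] same_blocks that by metis
  moreover have "B \<in> \<pi>" if "B \<in> \<pi>'" for B
    using pair_partitions_block[OF pp' that] same_blocks that by metis
  ultimately show "\<pi> = \<pi>'"
    by blast
qed

lemma open_labels_determine:
  assumes loopless: "\<And>v. \<not> E v v"
    and pp: "\<pi> \<in> pair_partitions n" and pp': "\<pi>' \<in> pair_partitions n"
    and h: "\<phi> \<in> graph_homs L E \<pi>" and h': "\<phi>' \<in> graph_homs L E \<pi>'"
    and eq: "\<And>j. j \<le> n \<Longrightarrow> open_labels \<pi> \<phi> j = open_labels \<pi>' \<phi>' j"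
  shows "(\<pi>, \<phi>) = (\<pi>', \<phi>')"
proof -
  have "\<pi> = \<pi>'"
    using pair_partition_eq_if_open_labels_eq[OF assms] .
  moreover have "\<phi> B = \<phi>' B" for B
  proof (cases "B \<in> \<pi>")
    case True
    obtain a b where ab: "B = {a, b}" "a < b" "1 \<le> a" "b \<le> n"
      using pair_partitions_block[OF pp True] .
    then obtain a' where a'b: "{a', b} \<in> \<pi>'" "\<phi>' {a', b} = \<phi> {a, b}"
      using closer_of_open_labels_eq[OF pp pp' eq] True by blast
    then have "{a', b} = {a, b}"
      using pair_partitions_block_unique[OF pp' a'b(1), of B b] True ab(1) \<open>\<pi> = \<pi>'\<close> by simp
    with a'b(2) ab(1) show ?thesis
      by simp
  next
    case False
    have "\<phi> \<in> \<pi> \<rightarrow>\<^sub>E {1..L}" "\<phi>' \<in> \<pi> \<rightarrow>\<^sub>E {1..L}"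
      using h h' \<open>\<pi> = \<pi>'\<close> unfolding graph_homs_def by blast+
    then show ?thesis
      using PiE_arb False by metis
  qed
  ultimately show ?thesis
    by auto
qed

lemma open_labels_eq_if_Phi_eq:
  assumes Phi: "Phi E (Suc p) (\<pi>, \<phi>) = Phi E (Suc p) (\<pi>', \<phi>')"
    and pp: "\<pi> \<in> pair_partitions (2 * Suc p)" and pp': "\<pi>' \<in> pair_partitions (2 * Suc p)"
    and "j \<le> 2 * Suc p"
  shows "open_labels \<pi> \<phi> j = open_labels \<pi>' \<phi>' j"
proof (cases "j = 0")
  case True
  then show ?thesis
    using open_labels_zero[OF pp] open_labels_zero[OF pp'] by simp
next
  case False
  with \<open>j \<le> 2 * Suc p\<close> have j: "j \<in> {1..2 * Suc p}"
    by simp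
  then have "j \<in> set [1..<2 * Suc p + 1]"
    by auto
  then have "PhiF E (Suc p) \<pi> \<phi> j = PhiF E (Suc p) \<pi>' \<phi>' j"
    using Phi unfolding Phi_def map_eq_conv prod.sel by blast
  then show ?thesis
    using PhiF_content[OF pp j] PhiF_content[OF pp' j] traces_with_content_unique by metis
qed

theorem lemma3p3:
  fixes L p :: nat and E :: "nat \<Rightarrow> nat \<Rightarrow> bool"
  assumes "simple_graph_on L E" and "p \<ge> 1"
  shows "inj_on (Phi E p) (Pi2p L E p)"
proof (rule inj_onI)
  fix x y
  assume x: "x \<in> Pi2p L E p" and y: "y \<in> Pi2p L E p" and Phi: "Phi E p x = Phi E p y"
  obtain \<pi> \<phi> \<pi>' \<phi>' where xy: "x = (\<pi>, \<phi>)" "y = (\<pi>', \<phi>')"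
    by fastforce
  obtain q where p: "p = Suc q"
    using \<open>p \<ge> 1\<close> by (cases p) auto
  have loopless: "\<And>v. \<not> E v v"
    using assms(1) unfolding simple_graph_on_def by blast
  have pp: "\<pi> \<in> pair_partitions (2 * Suc q)" "\<pi>' \<in> pair_partitions (2 * Suc q)"
    and h: "\<phi> \<in> graph_homs L E \<pi>" "\<phi>' \<in> graph_homs L E \<pi>'"
    using x y unfolding xy p Pi2p_def by auto
  have "open_labels \<pi> \<phi> j = open_labels \<pi>' \<phi>' j" if "j \<le> 2 * Suc q" for j
    using open_labels_eq_if_Phi_eq[OF _ pp that] Phi unfolding xy p by blast
  then show "x = y"
    unfolding xy by (rule open_labels_determine[OF loopless pp h])
qed

end
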